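(* Let $t<n$, let $\mathcal{E}$ be an information exchange and $P$ a decision protocol for the hard crash context $(\mathcal{E},\mathit{Crash}_t)$ such that SBA($\mathcal{N}$) is valid in $\mathcal{I}_{P,\mathcal{E},\mathit{Crash}_t}$. Then for every agent $i$ and value $v$, the formulas $C_{\mathcal{A}}(\mathtt{decides}_{\mathcal{A}}(v))\Leftrightarrow CB_{\mathcal{N}}(\mathtt{decides}_{\mathcal{N}}(v))$ and $i\in\mathcal{A}\Rightarrow\big(K_i C_{\mathcal{A}}(\mathtt{decides}_{\mathcal{A}}(v))\Leftrightarrow B^{\mathcal{N}}_i CB_{\mathcal{N}}(\mathtt{decides}_{\mathcal{N}}(v))\big)$ are valid in $\mathcal{I}_{P,\mathcal{E},\mathit{Crash}_t}$.
   Context: Agents $\mathrm{Agt}=\{1,\dots,n\}$; decision values $V$; actions $A_i=\{\mathtt{noop}\}\cup\{\mathtt{decide}_i(v):v\in V\}$. An information exchange $\mathcal{E}$ gives each agent $i$ a tuple $(L_i,I_i,M_i,\mu_i,\delta_i)$: local states $L_i$ of the form $\langle\mathit{init}_i,\mathit{time}_i,\dots\rangle$ ($\mathit{init}_i\in V$ the initial preference) together with a distinguished state $\mathit{crashed}$; initial states $I_i$; messages $M_i\ni\bot$; $\mu_i:L_i\times A_i\to(\mathrm{Agt}\to M_i)$; $\delta_i:L_i\times A_i\times\prod_jM_j\to L_i$ (preserving $\mathit{init}_i$, incrementing $\mathit{time}_i$). A decision protocol is $P=(P_i:L_i\to A_i)_i$; in the hard crash model $P_i(\mathit{crashed})=\mathtt{noop}$.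 A failure model $(L^*_e,I_e,\delta_e,\mathit{Adv})$ has environment states, initial ones, update $\delta_e:L^*_e\times\prod_iA_i\to L^*_e$, adversaries $(\Delta^t,\Delta^r,\Delta^s)$, $\Delta^t,\Delta^r:\mathbb{N}\times\mathrm{Agt}\times\mathrm{Agt}\times\bigcup_iM_i\to\bigcup_iM_i$, $\Delta^s_i:\mathbb{N}\times L_i\to L_i$. Runs $r$ of $\mathcal{I}_{P,\mathcal{E},\mathcal{F}}$: $r(0)=((s_e,\alpha),s_1,\dots,s_n)$ with $s_e\in I_e,\alpha\in\mathit{Adv},s_i\in I_i$; from $r(k)=((s_e,\alpha),s_1,\dots,s_n)$, $r(k+1)=((\delta_e(s_e,(a_1,\dots,a_n)),\alpha),s'_1,\dots,s'_n)$ with $a_i=P_i(s_i)$, $m_{i,j}=\mu_i(s_i,a_i)(j)$, $m'_{i,j}=\Delta^r(k,i,j,\Delta^t(k,i,j,m_{i,j}))$, $s^*_j=\delta_j(s_j,a_j,(m'_{1,j},\dots,m'_{n,j}))$, $s'_j=\Delta^s_j(k,s^*_j)$. $\mathit{Crash}_t$: adversaries in which at most $t$ agents crash; $\Delta^r(k,i,j,m)=m$ always; an agent $i$ crashing in round $k+1$ has $\Delta^s_i(k',s)=\mathit{crashed}$ for all $s$ and $k'\ge k$, some $J\subseteq\mathrm{Agt}$ with $\Delta^t(k,i,j,m)=\bot$ for $j\in J$ and $=m$ otherwise, and $\Delta^t(k',i,j,m)=\bot$ for all $j$ and $k'>k$; otherwise $\Delta^s_i$ and $\Delta^t(\cdot,i,\cdot,\cdot)$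 act as identity. An agent has a fault in a round if its sent messages are altered, its received messages altered, or its updated state altered. $\mathcal{N}(r,m)$ = agents with no fault in any round of $r$; $\mathcal{A}(r,m)$ = agents with no fault in rounds $1..m$. $\mathtt{decides}_i(v)$ holds at $(r,m)$ iff $P_i(r_i(m))=\mathtt{decide}_i(v)$; $\mathtt{decides}_S(v):=\bigwedge_{i\in S}\mathtt{decides}_i(v)$. $(r,m)\sim_i(r',m')$ iff $r_i(m)=r'_i(m')$; $K_i\phi$ holds iff $\phi$ holds at all $\sim_i$-related points. For an indexical set $S$: $B^S_i\phi:=K_i(i\in S\Rightarrow\phi)$, $E^B_S\phi:=\bigwedge_{i\in S}B^S_i\phi$, $E_S\phi:=\bigwedge_{i\in S}K_i\phi$, $CB_S\phi:=\bigwedge_{k\ge1}(E^B_S)^k\phi$, $C_S\phi:=\bigwedge_{k\ge1}E_S^k\phi$. SBA($\mathcal{N}$) valid means in every run: each agent decides at most once; if $i\in\mathcal{N}(r,m)$ performs $\mathtt{decide}_i(v)$ at time $m$ then every $j\in\mathcal{N}(r,m)$ performs $\mathtt{decide}_j(v)$ at time $m$; and then some agent has initial preference $v$. *)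

theory Defs
  imports Main
begin

text \<open>Actions of agent i: noop or decide_i(v).  The agent index of decide_i is implicit
  (actions are always performed by the agent owning the protocol).\<close>
datatype 'v act = Noop | Decide 'v

text \<open>Local states: either the distinguished state crashed, or a tuple
  (init_i, time_i, rest).\<close>
datatype ('v, 'x) lstate = Crashed | St 'v nat 'x

fun linit :: "('v, 'x) lstate \<Rightarrow> 'v" where
  "linit (St v k x) = v"
| "linit Crashed = undefined"

text \<open>Messages: the type 'm option; None plays the role of the null message bot.\<close>

record ('a, 'v, 'x, 'm) iex =
  Lst   :: "'a \<Rightarrow> ('v, 'x) lstate set"
  Ist   :: "'a \<Rightarrow> ('v, 'x) lstate set"
  Msg   :: "'a \<Rightarrow> 'm option set"
  mu    :: "'a \<Rightarrow> ('v, 'x) lstate \<Rightarrow> 'v act \<Rightarrow> 'a \<Rightarrow> 'm option"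
  delta :: "'a \<Rightarrow> ('v, 'x) lstate \<Rightarrow> 'v act \<Rightarrow> ('a \<Rightarrow> 'm option) \<Rightarrow> ('v, 'x) lstate"

text \<open>Well-formedness of an information exchange.  delta i s a ms receives in ms j the
  message received from agent j.\<close>
definition iex_wf :: "('a, 'v, 'x, 'm) iex \<Rightarrow> bool" where
  "iex_wf E \<longleftrightarrow>
     (\<forall>i. Crashed \<in> Lst E i) \<and>
     (\<forall>i. Ist E i \<subseteq> Lst E i) \<and>
     (\<forall>i s. s \<in> Ist E i \<longrightarrow> (\<exists>v x. s = St v 0 x)) \<and>
     (\<forall>i. None \<in> Msg E i) \<and>
     (\<forall>i s a j. s \<in> Lst E i \<longrightarrow> mu E i s a j \<in> Msg E i) \<and>
     (\<forall>i s a ms. s \<in> Lst E i \<longrightarrow> (\<forall>j. ms j \<in> Msg E j) \<longrightarrow> delta E i s a ms \<in> Lst E i) \<and>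
     (\<forall>i v k x a ms. St v k x \<in> Lst E i \<longrightarrow> (\<forall>j. ms j \<in> Msg E j) \<longrightarrow>
         (\<exists>x'. delta E i (St v k x) a ms = St v (Suc k) x'))"

definition hard_crash_protocol :: "('a \<Rightarrow> ('v, 'x) lstate \<Rightarrow> 'v act) \<Rightarrow> bool" where
  "hard_crash_protocol P \<longleftrightarrow> (\<forall>i. P i Crashed = Noop)"

record ('a, 'v, 'x, 'm) adv =
  dT :: "nat \<Rightarrow> 'a \<Rightarrow> 'a \<Rightarrow> 'm option \<Rightarrow> 'm option"
  dR :: "nat \<Rightarrow> 'a \<Rightarrow> 'a \<Rightarrow> 'm option \<Rightarrow> 'm option"
  dS :: "'a \<Rightarrow> nat \<Rightarrow> ('v, 'x) lstate \<Rightarrow> ('v, 'x) lstate"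

text \<open>Agent i crashes in round k+1 under adversary alpha.\<close>
definition crashes_at :: "('a, 'v, 'x, 'm) adv \<Rightarrow> 'a \<Rightarrow> nat \<Rightarrow> bool" where
  "crashes_at \<alpha> i k \<longleftrightarrow>
     (\<forall>k' s. k' \<ge> k \<longrightarrow> dS \<alpha> i k' s = Crashed) \<and>
     (\<forall>k' s. k' < k \<longrightarrow> dS \<alpha> i k' s = s) \<and>
     (\<exists>J. \<forall>j m. dT \<alpha> k i j m = (if j \<in> J then None else m)) \<and>
     (\<forall>k' j m. k' > k \<longrightarrow> dT \<alpha> k' i j m = None) \<and>
     (\<forall>k' j m. k' < k \<longrightarrow> dT \<alpha> k' i j m = m)"

definition never_crashes :: "('a, 'v, 'x, 'm) adv \<Rightarrow> 'a \<Rightarrow> bool" where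
  "never_crashes \<alpha> i \<longleftrightarrow> (\<forall>k s. dS \<alpha> i k s = s) \<and> (\<forall>k j m. dT \<alpha> k i j m = m)"

definition Crash :: "nat \<Rightarrow> ('a, 'v, 'x, 'm) adv set" where
  "Crash t = {\<alpha>. (\<forall>k i j m. dR \<alpha> k i j m = m) \<and>
                 (\<forall>i. never_crashes \<alpha> i \<or> (\<exists>k. crashes_at \<alpha> i k)) \<and>
                 finite {i. \<exists>k. crashes_at \<alpha> i k} \<and>
                 card {i. \<exists>k. crashes_at \<alpha> i k} \<le> t}"

type_synonym ('e, 'a, 'v, 'x, 'm) gstate =
  "('e \<times> ('a, 'v, 'x, 'm) adv) \<times> ('a \<Rightarrow> ('v, 'x) lstate)"

type_synonym ('e, 'a, 'v, 'x, 'm) run = "nat \<Rightarrow> ('e, 'a, 'v, 'x, 'm) gstate"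

definition loc :: "('e, 'a, 'v, 'x, 'm) run \<Rightarrow> nat \<Rightarrow> 'a \<Rightarrow> ('v, 'x) lstate" where
  "loc r m i = snd (r m) i"

definition advr :: "('e, 'a, 'v, 'x, 'm) run \<Rightarrow> ('a, 'v, 'x, 'm) adv" where
  "advr r = snd (fst (r 0))"

text \<open>Messages sent from i to j in round k+1 (computed from r(k)).\<close>
definition sent :: "('a, 'v, 'x, 'm) iex \<Rightarrow> ('a \<Rightarrow> ('v, 'x) lstate \<Rightarrow> 'v act)
    \<Rightarrow> ('a \<Rightarrow> ('v, 'x) lstate) \<Rightarrow> 'a \<Rightarrow> 'a \<Rightarrow> 'm option" where
  "sent E P s i j = mu E i (s i) (P i (s i)) j"

definition recvd :: "('a, 'v, 'x, 'm) iex \<Rightarrow> ('a \<Rightarrow> ('v, 'x) lstate \<Rightarrow> 'v act)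
    \<Rightarrow> ('a, 'v, 'x, 'm) adv \<Rightarrow> nat \<Rightarrow> ('a \<Rightarrow> ('v, 'x) lstate) \<Rightarrow> 'a \<Rightarrow> 'a \<Rightarrow> 'm option" where
  "recvd E P \<alpha> k s i j = dR \<alpha> k i j (dT \<alpha> k i j (sent E P s i j))"

definition sstar :: "('a, 'v, 'x, 'm) iex \<Rightarrow> ('a \<Rightarrow> ('v, 'x) lstate \<Rightarrow> 'v act)
    \<Rightarrow> ('a, 'v, 'x, 'm) adv \<Rightarrow> nat \<Rightarrow> ('a \<Rightarrow> ('v, 'x) lstate) \<Rightarrow> 'a \<Rightarrow> ('v, 'x) lstate" where
  "sstar E P \<alpha> k s j = delta E j (s j) (P j (s j)) (\<lambda>i. recvd E P \<alpha> k s i j)"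

definition gstep :: "('a, 'v, 'x, 'm) iex \<Rightarrow> ('a \<Rightarrow> ('v, 'x) lstate \<Rightarrow> 'v act)
    \<Rightarrow> ('e \<Rightarrow> ('a \<Rightarrow> 'v act) \<Rightarrow> 'e) \<Rightarrow> nat
    \<Rightarrow> ('e, 'a, 'v, 'x, 'm) gstate \<Rightarrow> ('e, 'a, 'v, 'x, 'm) gstate" where
  "gstep E P de k g =
     (let se = fst (fst g); \<alpha> = snd (fst g); s = snd g
      in ((de se (\<lambda>i. P i (s i)), \<alpha>), (\<lambda>j. dS \<alpha> j k (sstar E P \<alpha> k s j))))"

text \<open>The runs of I_{P,E,F} for the failure model F = (L_e, Ie, de, Crash t).\<close>
definition runs :: "('a, 'v, 'x, 'm) iex \<Rightarrow> ('a \<Rightarrow> ('v, 'x) lstate \<Rightarrow> 'v act)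
    \<Rightarrow> 'e set \<Rightarrow> ('e \<Rightarrow> ('a \<Rightarrow> 'v act) \<Rightarrow> 'e) \<Rightarrow> nat \<Rightarrow> ('e, 'a, 'v, 'x, 'm) run set" where
  "runs E P Ie de t = {r.
     fst (fst (r 0)) \<in> Ie \<and> snd (fst (r 0)) \<in> Crash t \<and> (\<forall>i. snd (r 0) i \<in> Ist E i) \<and>
     (\<forall>k. r (Suc k) = gstep E P de k (r k))}"

text \<open>Agent i has a fault in round k+1 of run r.\<close>
definition fault :: "('a, 'v, 'x, 'm) iex \<Rightarrow> ('a \<Rightarrow> ('v, 'x) lstate \<Rightarrow> 'v act)
    \<Rightarrow> ('e, 'a, 'v, 'x, 'm) run \<Rightarrow> 'a \<Rightarrow> nat \<Rightarrow> bool" where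
  "fault E P r i k \<longleftrightarrow>
     (let \<alpha> = snd (fst (r k)); s = snd (r k) in
        (\<exists>j. dT \<alpha> k i j (sent E P s i j) \<noteq> sent E P s i j) \<or>
        (\<exists>j. dR \<alpha> k j i (dT \<alpha> k j i (sent E P s j i)) \<noteq> dT \<alpha> k j i (sent E P s j i)) \<or>
        dS \<alpha> i k (sstar E P \<alpha> k s i) \<noteq> sstar E P \<alpha> k s i)"

definition Nset :: "('a, 'v, 'x, 'm) iex \<Rightarrow> ('a \<Rightarrow> ('v, 'x) lstate \<Rightarrow> 'v act)
    \<Rightarrow> ('e, 'a, 'v, 'x, 'm) run \<Rightarrow> nat \<Rightarrow> 'a set" where
  "Nset E P r m = {i. \<forall>k. \<not> fault E P r i k}"

definition Aset :: "('a, 'v, 'x, 'm) iex \<Rightarrow> ('a \<Rightarrow> ('v, 'x) lstate \<Rightarrow> 'v act)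
    \<Rightarrow> ('e, 'a, 'v, 'x, 'm) run \<Rightarrow> nat \<Rightarrow> 'a set" where
  "Aset E P r m = {i. \<forall>k<m. \<not> fault E P r i k}"

section \<open>Epistemic operators over a system R (formulas = predicates on points)\<close>

type_synonym ('e, 'a, 'v, 'x, 'm) fml = "('e, 'a, 'v, 'x, 'm) run \<Rightarrow> nat \<Rightarrow> bool"

definition valid :: "('e, 'a, 'v, 'x, 'm) run set \<Rightarrow> ('e, 'a, 'v, 'x, 'm) fml \<Rightarrow> bool" where
  "valid R \<phi> \<longleftrightarrow> (\<forall>r\<in>R. \<forall>m. \<phi> r m)"

definition Kn :: "('e, 'a, 'v, 'x, 'm) run set \<Rightarrow> 'a \<Rightarrow> ('e, 'a, 'v, 'x, 'm) fml
    \<Rightarrow> ('e, 'a, 'v, 'x, 'm) fml" where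
  "Kn R i \<phi> r m \<longleftrightarrow> (\<forall>r'\<in>R. \<forall>m'. loc r' m' i = loc r m i \<longrightarrow> \<phi> r' m')"

definition Bel :: "('e, 'a, 'v, 'x, 'm) run set \<Rightarrow> (('e, 'a, 'v, 'x, 'm) run \<Rightarrow> nat \<Rightarrow> 'a set)
    \<Rightarrow> 'a \<Rightarrow> ('e, 'a, 'v, 'x, 'm) fml \<Rightarrow> ('e, 'a, 'v, 'x, 'm) fml" where
  "Bel R S i \<phi> = Kn R i (\<lambda>r m. i \<in> S r m \<longrightarrow> \<phi> r m)"

definition EB :: "('e, 'a, 'v, 'x, 'm) run set \<Rightarrow> (('e, 'a, 'v, 'x, 'm) run \<Rightarrow> nat \<Rightarrow> 'a set)
    \<Rightarrow> ('e, 'a, 'v, 'x, 'm) fml \<Rightarrow> ('e, 'a, 'v, 'x, 'm) fml" where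
  "EB R S \<phi> r m \<longleftrightarrow> (\<forall>i\<in>S r m. Bel R S i \<phi> r m)"

definition Ek :: "('e, 'a, 'v, 'x, 'm) run set \<Rightarrow> (('e, 'a, 'v, 'x, 'm) run \<Rightarrow> nat \<Rightarrow> 'a set)
    \<Rightarrow> ('e, 'a, 'v, 'x, 'm) fml \<Rightarrow> ('e, 'a, 'v, 'x, 'm) fml" where
  "Ek R S \<phi> r m \<longleftrightarrow> (\<forall>i\<in>S r m. Kn R i \<phi> r m)"

definition CB :: "('e, 'a, 'v, 'x, 'm) run set \<Rightarrow> (('e, 'a, 'v, 'x, 'm) run \<Rightarrow> nat \<Rightarrow> 'a set)
    \<Rightarrow> ('e, 'a, 'v, 'x, 'm) fml \<Rightarrow> ('e, 'a, 'v, 'x, 'm) fml" where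
  "CB R S \<phi> r m \<longleftrightarrow> (\<forall>k\<ge>1. (EB R S ^^ k) \<phi> r m)"

definition Ck :: "('e, 'a, 'v, 'x, 'm) run set \<Rightarrow> (('e, 'a, 'v, 'x, 'm) run \<Rightarrow> nat \<Rightarrow> 'a set)
    \<Rightarrow> ('e, 'a, 'v, 'x, 'm) fml \<Rightarrow> ('e, 'a, 'v, 'x, 'm) fml" where
  "Ck R S \<phi> r m \<longleftrightarrow> (\<forall>k\<ge>1. (Ek R S ^^ k) \<phi> r m)"

definition decides :: "('a \<Rightarrow> ('v, 'x) lstate \<Rightarrow> 'v act) \<Rightarrow> 'a \<Rightarrow> 'v \<Rightarrow> ('e, 'a, 'v, 'x, 'm) fml" where
  "decides P i v r m \<longleftrightarrow> P i (loc r m i) = Decide v"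

definition decidesS :: "('a \<Rightarrow> ('v, 'x) lstate \<Rightarrow> 'v act)
    \<Rightarrow> (('e, 'a, 'v, 'x, 'm) run \<Rightarrow> nat \<Rightarrow> 'a set) \<Rightarrow> 'v \<Rightarrow> ('e, 'a, 'v, 'x, 'm) fml" where
  "decidesS P S v r m \<longleftrightarrow> (\<forall>i\<in>S r m. decides P i v r m)"

definition SBA_N_valid :: "('a, 'v, 'x, 'm) iex \<Rightarrow> ('a \<Rightarrow> ('v, 'x) lstate \<Rightarrow> 'v act)
    \<Rightarrow> ('e, 'a, 'v, 'x, 'm) run set \<Rightarrow> bool" where
  "SBA_N_valid E P R \<longleftrightarrow> (\<forall>r\<in>R.
     (\<forall>i m m' v v'. decides P i v r m \<longrightarrow> decides P i v' r m' \<longrightarrow> m = m') \<and>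
     (\<forall>i m v. i \<in> Nset E P r m \<longrightarrow> decides P i v r m \<longrightarrow>
        (\<forall>j\<in>Nset E P r m. decides P j v r m) \<and> (\<exists>j. linit (loc r 0 j) = v)))"

end

theory Submission
  imports Defs
begin

text \<open>In the crash model an agent is in \<open>\<A>\<close> at time \<open>m\<close> iff it has not crashed by time \<open>m\<close>,
  and in \<open>\<N>\<close> iff it never crashes.  For a point \<open>(r, m)\<close> let \<open>r\<^sup>m\<close> be the run with the same
  initial state and adversary, except that the agents that would crash only after time \<open>m\<close> are
  spared.  Then \<open>r\<^sup>m\<close> agrees with \<open>r\<close> up to time \<open>m\<close> and its nonfaulty agents are exactly
  \<open>\<A>(r, m)\<close>; as \<open>t < n\<close>, some agent is nonfaulty in both runs, so \<open>(r, m)\<close> and \<open>(r\<^sup>m, m)\<close> are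
  \<open>\<N>\<close>-belief neighbours in both directions.  Hence an \<open>\<A>\<close>-knowledge step from \<open>(r, m)\<close> to
  \<open>(r', m')\<close> is simulated by the \<open>\<N>\<close>-belief path through \<open>(r\<^sup>m, m)\<close> and \<open>(r'\<^sup>m\<^sup>', m')\<close>, while
  every \<open>\<N>\<close>-belief step is an \<open>\<A>\<close>-knowledge step.  So the points relevant to \<open>C\<^sub>\<A>\<close> and to
  \<open>CB\<^sub>\<N>\<close> coincide up to passing to spared twins, where \<open>decides\<^sub>\<N>\<close> and \<open>decides\<^sub>\<A>\<close> agree.\<close>

section \<open>Common knowledge and common belief as reachability\<close>

lemma funpow_iff_relpowp:
  fixes F :: "('r \<Rightarrow> 'n \<Rightarrow> bool) \<Rightarrow> 'r \<Rightarrow> 'n \<Rightarrow> bool"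
  assumes "\<And>\<phi> r m. F \<phi> r m \<longleftrightarrow> (\<forall>r' m'. step (r, m) (r', m') \<longrightarrow> \<phi> r' m')"
  shows "(F ^^ k) \<phi> r m \<longleftrightarrow> (\<forall>r' m'. (step ^^ k) (r, m) (r', m') \<longrightarrow> \<phi> r' m')"
proof (induction k arbitrary: r m)
  case (Suc k)
  have "(F ^^ Suc k) \<phi> r m \<longleftrightarrow> (\<forall>r' m'. step (r, m) (r', m') \<longrightarrow> (F ^^ k) \<phi> r' m')"
    by (simp add: assms)
  also have "\<dots> \<longleftrightarrow> (\<forall>r' m'. (step OO step ^^ k) (r, m) (r', m') \<longrightarrow> \<phi> r' m')"
    unfolding Suc.IH by fast
  finally show ?case
    by (simp only: relpowp_Suc_left)
qed simp

lemma all_funpow_iff_tranclp: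
  assumes "\<And>\<phi> r m. F \<phi> r m \<longleftrightarrow> (\<forall>r' m'. step (r, m) (r', m') \<longrightarrow> \<phi> r' m')"
  shows "(\<forall>k\<ge>1. (F ^^ k) \<phi> r m) \<longleftrightarrow> (\<forall>r' m'. step\<^sup>+\<^sup>+ (r, m) (r', m') \<longrightarrow> \<phi> r' m')"
  unfolding funpow_iff_relpowp[where F = F and step = step, OF assms] tranclp_power
  by (auto simp: Suc_le_eq)

fun Ek_step :: "('e, 'a, 'v, 'x, 'm) run set \<Rightarrow> (('e, 'a, 'v, 'x, 'm) run \<Rightarrow> nat \<Rightarrow> 'a set)
    \<Rightarrow> ('e, 'a, 'v, 'x, 'm) run \<times> nat \<Rightarrow> ('e, 'a, 'v, 'x, 'm) run \<times> nat \<Rightarrow> bool" where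
  "Ek_step R S (r, m) (r', m') \<longleftrightarrow> r' \<in> R \<and> (\<exists>i\<in>S r m. loc r' m' i = loc r m i)"

fun EB_step :: "('e, 'a, 'v, 'x, 'm) run set \<Rightarrow> (('e, 'a, 'v, 'x, 'm) run \<Rightarrow> nat \<Rightarrow> 'a set)
    \<Rightarrow> ('e, 'a, 'v, 'x, 'm) run \<times> nat \<Rightarrow> ('e, 'a, 'v, 'x, 'm) run \<times> nat \<Rightarrow> bool" where
  "EB_step R S (r, m) (r', m') \<longleftrightarrow> r' \<in> R \<and> (\<exists>i\<in>S r m \<inter> S r' m'. loc r' m' i = loc r m i)"

lemma Ck_iff_reachable:
  "Ck R S \<phi> r m \<longleftrightarrow> (\<forall>r' m'. (Ek_step R S)\<^sup>+\<^sup>+ (r, m) (r', m') \<longrightarrow> \<phi> r' m')"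
  unfolding Ck_def by (rule all_funpow_iff_tranclp) (auto simp: Ek_def Kn_def)

lemma CB_iff_reachable:
  "CB R S \<phi> r m \<longleftrightarrow> (\<forall>r' m'. (EB_step R S)\<^sup>+\<^sup>+ (r, m) (r', m') \<longrightarrow> \<phi> r' m')"
  unfolding CB_def by (rule all_funpow_iff_tranclp) (auto simp: EB_def Bel_def Kn_def)

lemma CB_EB_step:
  assumes "CB R S \<phi> r m" and "EB_step R S (r, m) (r', m')"
  shows "CB R S \<phi> r' m'"
  using assms tranclp_into_tranclp2[of "EB_step R S" "(r, m)" "(r', m')"]
  by (auto simp: CB_iff_reachable)

lemma EB_step_imp_Ek_step:
  assumes "\<And>r m. S r m \<subseteq> T r m" and "EB_step R S p q"
  shows "Ek_step R T p q"
  using assms by (cases p, cases q) auto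

lemma EB_reachable_imp_Ek_reachable:
  assumes "\<And>r m. S r m \<subseteq> T r m" and "(EB_step R S)\<^sup>+\<^sup>+ p q"
  shows "(Ek_step R T)\<^sup>+\<^sup>+ p q"
  using assms(2)
  by induction (auto intro: EB_step_imp_Ek_step[OF assms(1)] tranclp.trancl_into_trancl)

lemma Ck_imp_CB_of_subset:
  assumes "\<And>r m. S r m \<subseteq> T r m" and "Ck R T (decidesS P T v) r m"
  shows "CB R S (decidesS P S v) r m"
  using assms EB_reachable_imp_Ek_reachable[OF assms(1)]
  by (fastforce simp: Ck_iff_reachable CB_iff_reachable decidesS_def)

section \<open>Runs in the crash failure model\<close>

lemma Crash_dR: "\<alpha> \<in> Crash t \<Longrightarrow> dR \<alpha> k i j x = x"
  by (simp add: Crash_def)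

lemma Crash_never_crashes_or_crashes_at:
  "\<alpha> \<in> Crash t \<Longrightarrow> never_crashes \<alpha> i \<or> (\<exists>k. crashes_at \<alpha> i k)"
  by (simp add: Crash_def)

lemma Crash_dT_cases:
  assumes "\<alpha> \<in> Crash t"
  shows "dT \<alpha> k i j x = x \<or> dT \<alpha> k i j x = None"
  using Crash_never_crashes_or_crashes_at[OF assms, of i]
proof
  assume "\<exists>k0. crashes_at \<alpha> i k0"
  then obtain k0 where "crashes_at \<alpha> i k0" ..
  then show ?thesis
    unfolding crashes_at_def by (metis linorder_neqE_nat)
qed (simp add: never_crashes_def)

lemma Crash_dS_cases:
  assumes "\<alpha> \<in> Crash t"
  shows "dS \<alpha> i k s = s \<or> dS \<alpha> i k s = Crashed"
  using Crash_never_crashes_or_crashes_at[OF assms, of i]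
proof
  assume "\<exists>k0. crashes_at \<alpha> i k0"
  then obtain k0 where "crashes_at \<alpha> i k0" ..
  then show ?thesis
    unfolding crashes_at_def by (metis not_le)
qed (simp add: never_crashes_def)

lemma runs_adv_const:
  assumes "r \<in> runs E P Ie de t"
  shows "snd (fst (r k)) = advr r"
proof (induction k)
  case (Suc k)
  then show ?case
    using assms by (simp add: runs_def gstep_def Let_def)
qed (simp add: advr_def)

lemma runs_advr_Crash: "r \<in> runs E P Ie de t \<Longrightarrow> advr r \<in> Crash t"
  by (simp add: runs_def advr_def)

lemma loc_0_in_Ist: "r \<in> runs E P Ie de t \<Longrightarrow> loc r 0 i \<in> Ist E i"
  by (simp add: runs_def loc_def)

lemma loc_Suc:
  assumes "r \<in> runs E P Ie de t"
  shows "loc r (Suc k) i = dS (advr r) i k (sstar E P (advr r) k (loc r k) i)"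
  using assms runs_adv_const[OF assms, of k]
  by (simp add: runs_def gstep_def Let_def loc_def[abs_def])

text \<open>The receive clause of \<^const>\<open>fault\<close> disappears because \<open>dR\<close> is the identity in \<open>Crash t\<close>.\<close>

lemma fault_in_run_iff:
  assumes "r \<in> runs E P Ie de t"
  shows "fault E P r i k \<longleftrightarrow>
    (\<exists>j. dT (advr r) k i j (sent E P (loc r k) i j) \<noteq> sent E P (loc r k) i j) \<or>
    dS (advr r) i k (sstar E P (advr r) k (loc r k) i) \<noteq> sstar E P (advr r) k (loc r k) i"
  using Crash_dR[OF runs_advr_Crash[OF assms]]
  by (simp add: fault_def runs_adv_const[OF assms] loc_def[abs_def] Let_def)

lemma no_fault_if_never_crashes:
  "r \<in> runs E P Ie de t \<Longrightarrow> never_crashes (advr r) i \<Longrightarrow> \<not> fault E P r i k"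
  by (simp add: fault_in_run_iff never_crashes_def)

lemma no_fault_before_crash:
  "r \<in> runs E P Ie de t \<Longrightarrow> crashes_at (advr r) i k0 \<Longrightarrow> k < k0 \<Longrightarrow> \<not> fault E P r i k"
  by (simp add: fault_in_run_iff crashes_at_def)

lemma Nset_subset_Aset: "Nset E P r m \<subseteq> Aset E P r m"
  by (auto simp: Nset_def Aset_def)

locale crash_system =
  fixes E :: "('a, 'v, 'x, 'm) iex"
    and P :: "'a \<Rightarrow> ('v, 'x) lstate \<Rightarrow> 'v act"
    and Ie :: "'e set"
    and de :: "'e \<Rightarrow> ('a \<Rightarrow> 'v act) \<Rightarrow> 'e"
    and t :: nat
  assumes iex_wf: "iex_wf E"
begin

lemma recvd_in_Msg:
  assumes "\<alpha> \<in> Crash t" and "\<forall>j. s j \<in> Lst E j"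
  shows "recvd E P \<alpha> k s i j \<in> Msg E i"
proof -
  have "sent E P s i j \<in> Msg E i" and "None \<in> Msg E i"
    using iex_wf assms(2) by (simp_all add: iex_wf_def sent_def)
  then show ?thesis
    using Crash_dT_cases[OF assms(1), of k i j "sent E P s i j"]
    by (auto simp: recvd_def Crash_dR[OF assms(1)])
qed

lemma sstar_in_Lst:
  assumes "\<alpha> \<in> Crash t" and "\<forall>j. s j \<in> Lst E j"
  shows "sstar E P \<alpha> k s j \<in> Lst E j"
  using iex_wf assms(2) recvd_in_Msg[OF assms] by (simp add: iex_wf_def sstar_def)

lemma delta_St:
  assumes "St v n x \<in> Lst E i" and "\<forall>j. ms j \<in> Msg E j"
  shows "\<exists>x'. delta E i (St v n x) a ms = St v (Suc n) x'"
  using iex_wf assms unfolding iex_wf_def by blast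

lemma sstar_not_Crashed:
  assumes "\<alpha> \<in> Crash t" and "\<forall>j. s j \<in> Lst E j" and "s j \<noteq> Crashed"
  shows "sstar E P \<alpha> k s j \<noteq> Crashed"
proof -
  obtain v n x where sj: "s j = St v n x"
    using assms(3) by (cases "s j") auto
  have "St v n x \<in> Lst E j"
    using assms(2) sj by metis
  moreover have "\<forall>i. recvd E P \<alpha> k s i j \<in> Msg E i"
    using recvd_in_Msg[OF assms(1,2)] by blast
  ultimately obtain x' where "sstar E P \<alpha> k s j = St v (Suc n) x'"
    using delta_St[where ms = "\<lambda>i. recvd E P \<alpha> k s i j"] unfolding sstar_def sj by blast
  then show ?thesis
    by simp
qed

lemma Crashed_in_Lst: "Crashed \<in> Lst E i"
  using iex_wf by (simp add: iex_wf_def)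

lemma loc_in_Lst:
  assumes "r \<in> runs E P Ie de t"
  shows "loc r k j \<in> Lst E j"
proof (induction k arbitrary: j)
  case 0
  show ?case
    using iex_wf loc_0_in_Ist[OF assms] by (auto simp: iex_wf_def)
next
  case (Suc k)
  have "sstar E P (advr r) k (loc r k) j \<in> Lst E j"
    using sstar_in_Lst[OF runs_advr_Crash[OF assms]] Suc.IH by blast
  then show ?case
    using Crash_dS_cases[OF runs_advr_Crash[OF assms]] Crashed_in_Lst
    by (metis loc_Suc[OF assms])
qed

lemma loc_0_not_Crashed:
  assumes "r \<in> runs E P Ie de t"
  shows "loc r 0 i \<noteq> Crashed"
proof -
  have "\<forall>s\<in>Ist E i. \<exists>v x. s = St v 0 x"
    using iex_wf by (simp add: iex_wf_def)
  then show ?thesis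
    using loc_0_in_Ist[OF assms] by fastforce
qed

lemma sstar_loc_not_Crashed:
  assumes "r \<in> runs E P Ie de t" and "loc r k i \<noteq> Crashed"
  shows "sstar E P (advr r) k (loc r k) i \<noteq> Crashed"
  using sstar_not_Crashed[OF runs_advr_Crash[OF assms(1)]] loc_in_Lst[OF assms(1)] assms(2)
  by blast

lemma loc_not_Crashed_if_never_crashes:
  assumes "r \<in> runs E P Ie de t" and "never_crashes (advr r) i"
  shows "loc r k i \<noteq> Crashed"
proof (induction k)
  case (Suc k)
  then show ?case
    using sstar_loc_not_Crashed[OF assms(1)] assms(2)
    by (simp add: loc_Suc[OF assms(1)] never_crashes_def)
qed (rule loc_0_not_Crashed[OF assms(1)])

lemma loc_Crashed_iff_after_crash:
  assumes "r \<in> runs E P Ie de t" and "crashes_at (advr r) i k0"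
  shows "loc r k i = Crashed \<longleftrightarrow> k0 < k"
proof (induction k)
  case (Suc k)
  show ?case
  proof (cases "k0 \<le> k")
    case True
    then show ?thesis
      using assms(2) by (simp add: loc_Suc[OF assms(1)] crashes_at_def)
  next
    case False
    then have "sstar E P (advr r) k (loc r k) i \<noteq> Crashed"
      using Suc.IH sstar_loc_not_Crashed[OF assms(1)] by simp
    then show ?thesis
      using False assms(2) by (simp add: loc_Suc[OF assms(1)] crashes_at_def)
  qed
qed (simp add: loc_0_not_Crashed[OF assms(1)])

lemma fault_at_crash:
  assumes "r \<in> runs E P Ie de t" and "crashes_at (advr r) i k0"
  shows "fault E P r i k0"
proof -
  have "sstar E P (advr r) k0 (loc r k0) i \<noteq> Crashed"
    using sstar_loc_not_Crashed[OF assms(1)] loc_Crashed_iff_after_crash[OF assms] by simp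
  moreover have "dS (advr r) i k0 (sstar E P (advr r) k0 (loc r k0) i) = Crashed"
    using assms(2) by (simp add: crashes_at_def)
  ultimately show ?thesis
    by (simp add: fault_in_run_iff[OF assms(1)])
qed

lemma Nset_iff_never_crashes:
  assumes "r \<in> runs E P Ie de t"
  shows "i \<in> Nset E P r m \<longleftrightarrow> never_crashes (advr r) i"
proof
  assume "i \<in> Nset E P r m"
  then have "\<not> crashes_at (advr r) i k" for k
    using fault_at_crash[OF assms] by (auto simp: Nset_def)
  then show "never_crashes (advr r) i"
    using Crash_never_crashes_or_crashes_at[OF runs_advr_Crash[OF assms]] by blast
next
  assume "never_crashes (advr r) i"
  then show "i \<in> Nset E P r m"
    using no_fault_if_never_crashes[OF assms] by (simp add: Nset_def)
qed

lemma Aset_iff_before_crash: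
  assumes "r \<in> runs E P Ie de t" and "crashes_at (advr r) i k0"
  shows "i \<in> Aset E P r m \<longleftrightarrow> m \<le> k0"
proof (cases "m \<le> k0")
  case True
  then show ?thesis
    using no_fault_before_crash[OF assms] by (simp add: Aset_def)
next
  case False
  then show ?thesis
    using fault_at_crash[OF assms] by (auto simp: Aset_def not_le)
qed

lemma Aset_iff_not_Crashed:
  assumes "r \<in> runs E P Ie de t"
  shows "i \<in> Aset E P r m \<longleftrightarrow> loc r m i \<noteq> Crashed"
proof (cases "never_crashes (advr r) i")
  case True
  then have "i \<in> Nset E P r m"
    using Nset_iff_never_crashes[OF assms] by simp
  then have "i \<in> Aset E P r m"
    by (rule subsetD[OF Nset_subset_Aset])
  then show ?thesis
    using loc_not_Crashed_if_never_crashes[OF assms True] by simp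
next
  case False
  then obtain k0 where k0: "crashes_at (advr r) i k0"
    using Crash_never_crashes_or_crashes_at[OF runs_advr_Crash[OF assms]] by blast
  show ?thesis
    unfolding Aset_iff_before_crash[OF assms k0] loc_Crashed_iff_after_crash[OF assms k0]
    by (rule not_less[symmetric])
qed

end

section \<open>Sparing the agents that crash late\<close>

text \<open>\<^term>\<open>crashes_at \<alpha> i k\<close> means a crash in round \<open>k + 1\<close>, so the agents in
  \<^term>\<open>crashes_after \<alpha> m\<close> are still active at time \<open>m\<close>.\<close>

definition crashes_after :: "('a, 'v, 'x, 'm) adv \<Rightarrow> nat \<Rightarrow> 'a set" where
  "crashes_after \<alpha> m = {i. \<exists>k\<ge>m. crashes_at \<alpha> i k}"

definition spare_adv :: "('a, 'v, 'x, 'm) adv \<Rightarrow> nat \<Rightarrow> ('a, 'v, 'x, 'm) adv" where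
  "spare_adv \<alpha> m = \<alpha>\<lparr>dT := (\<lambda>k i j x. if i \<in> crashes_after \<alpha> m then x else dT \<alpha> k i j x),
                     dS := (\<lambda>i k s. if i \<in> crashes_after \<alpha> m then s else dS \<alpha> i k s)\<rparr>"

primrec run_from :: "('a, 'v, 'x, 'm) iex \<Rightarrow> ('a \<Rightarrow> ('v, 'x) lstate \<Rightarrow> 'v act)
    \<Rightarrow> ('e \<Rightarrow> ('a \<Rightarrow> 'v act) \<Rightarrow> 'e) \<Rightarrow> ('e, 'a, 'v, 'x, 'm) gstate \<Rightarrow> ('e, 'a, 'v, 'x, 'm) run" where
  "run_from E P de g 0 = g"
| "run_from E P de g (Suc k) = gstep E P de k (run_from E P de g k)"

definition spare_run :: "('a, 'v, 'x, 'm) iex \<Rightarrow> ('a \<Rightarrow> ('v, 'x) lstate \<Rightarrow> 'v act)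
    \<Rightarrow> ('e \<Rightarrow> ('a \<Rightarrow> 'v act) \<Rightarrow> 'e) \<Rightarrow> ('e, 'a, 'v, 'x, 'm) run \<Rightarrow> nat
    \<Rightarrow> ('e, 'a, 'v, 'x, 'm) run" where
  "spare_run E P de r m = run_from E P de ((fst (fst (r 0)), spare_adv (advr r) m), snd (r 0))"

lemma dR_spare_adv [simp]: "dR (spare_adv \<alpha> m) = dR \<alpha>"
  by (simp add: spare_adv_def)

lemma dT_spare_adv:
  "dT (spare_adv \<alpha> m) k i j x = (if i \<in> crashes_after \<alpha> m then x else dT \<alpha> k i j x)"
  by (simp add: spare_adv_def)

lemma dS_spare_adv:
  "dS (spare_adv \<alpha> m) i k s = (if i \<in> crashes_after \<alpha> m then s else dS \<alpha> i k s)"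
  by (simp add: spare_adv_def)

lemma never_crashes_spare_adv:
  "never_crashes (spare_adv \<alpha> m) i \<longleftrightarrow> i \<in> crashes_after \<alpha> m \<or> never_crashes \<alpha> i"
  by (auto simp: never_crashes_def dT_spare_adv dS_spare_adv)

lemma crashes_at_spare_adv:
  "crashes_at (spare_adv \<alpha> m) i k \<longleftrightarrow> i \<notin> crashes_after \<alpha> m \<and> crashes_at \<alpha> i k"
proof (cases "i \<in> crashes_after \<alpha> m")
  case True
  then have "dS (spare_adv \<alpha> m) i k (St undefined 0 undefined) \<noteq> Crashed"
    by (simp add: dS_spare_adv)
  then show ?thesis
    using True by (auto simp: crashes_at_def)
qed (simp add: crashes_at_def dT_spare_adv dS_spare_adv)

lemma spare_adv_in_Crash:
  assumes "\<alpha> \<in> Crash t"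
  shows "spare_adv \<alpha> m \<in> Crash t"
proof -
  have crashing: "{i. \<exists>k. crashes_at (spare_adv \<alpha> m) i k} \<subseteq> {i. \<exists>k. crashes_at \<alpha> i k}"
    by (auto simp: crashes_at_spare_adv)
  have "finite {i. \<exists>k. crashes_at \<alpha> i k}" and "card {i. \<exists>k. crashes_at \<alpha> i k} \<le> t"
    using assms by (simp_all add: Crash_def)
  then have "finite {i. \<exists>k. crashes_at (spare_adv \<alpha> m) i k}"
    and "card {i. \<exists>k. crashes_at (spare_adv \<alpha> m) i k} \<le> t"
    using finite_subset[OF crashing] card_mono[OF _ crashing] by fastforce+
  moreover have "\<forall>i. never_crashes (spare_adv \<alpha> m) i \<or> (\<exists>k. crashes_at (spare_adv \<alpha> m) i k)"
    using assms by (auto simp: Crash_def never_crashes_spare_adv crashes_at_spare_adv)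
  ultimately show ?thesis
    using assms by (simp add: Crash_def)
qed

lemma advr_spare_run: "advr (spare_run E P de r m) = spare_adv (advr r) m"
  by (simp add: spare_run_def advr_def)

lemma spare_run_in_runs:
  "r \<in> runs E P Ie de t \<Longrightarrow> spare_run E P de r m \<in> runs E P Ie de t"
  using spare_adv_in_Crash[OF runs_advr_Crash] by (simp add: runs_def spare_run_def advr_def)

lemma loc_spare_run:
  assumes "r \<in> runs E P Ie de t" and "k \<le> m"
  shows "loc (spare_run E P de r m) k = loc r k"
  using assms(2)
proof (induction k)
  case 0
  then show ?case
    by (simp add: spare_run_def loc_def[abs_def])
next
  case (Suc k)
  let ?\<alpha> = "advr r"
  have "dT ?\<alpha> k i j x = x" and "dS ?\<alpha> i k s = s" if "i \<in> crashes_after ?\<alpha> m" for i j x s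
    using that Suc.prems by (auto simp: crashes_after_def crashes_at_def)
  then have dT_agree: "dT (spare_adv ?\<alpha> m) k = dT ?\<alpha> k"
    and dS_agree: "dS (spare_adv ?\<alpha> m) i k = dS ?\<alpha> i k" for i
    by (auto intro!: ext simp: dT_spare_adv dS_spare_adv)
  then have "sstar E P (spare_adv ?\<alpha> m) k = sstar E P ?\<alpha> k"
    by (auto intro!: ext simp: sstar_def recvd_def)
  then show ?case
    using Suc dS_agree
    by (auto intro!: ext simp: loc_Suc[OF spare_run_in_runs[OF assms(1)]] loc_Suc[OF assms(1)]
        advr_spare_run)
qed

context crash_system
begin

lemma Aset_iff_crashes_after:
  assumes "r \<in> runs E P Ie de t"
  shows "i \<in> Aset E P r m \<longleftrightarrow> never_crashes (advr r) i \<or> i \<in> crashes_after (advr r) m"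
proof (cases "never_crashes (advr r) i")
  case True
  then have "i \<in> Nset E P r m"
    using Nset_iff_never_crashes[OF assms] by simp
  then show ?thesis
    using True subsetD[OF Nset_subset_Aset] by simp
next
  case False
  then obtain k0 where "crashes_at (advr r) i k0"
    using Crash_never_crashes_or_crashes_at[OF runs_advr_Crash[OF assms]] by blast
  then have "i \<in> Aset E P r m \<longleftrightarrow> (\<exists>k\<ge>m. crashes_at (advr r) i k)"
    using Aset_iff_before_crash[OF assms] by blast
  then show ?thesis
    using False by (simp add: crashes_after_def)
qed

lemma Nset_spare_run:
  assumes "r \<in> runs E P Ie de t"
  shows "Nset E P (spare_run E P de r m) m' = Aset E P r m"
  using Nset_iff_never_crashes[OF spare_run_in_runs[OF assms]] Aset_iff_crashes_after[OF assms]
  by (auto simp: advr_spare_run never_crashes_spare_adv)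

lemma decidesS_Nset_spare_run:
  assumes "r \<in> runs E P Ie de t"
  shows "decidesS P (Nset E P) v (spare_run E P de r m) m \<longleftrightarrow> decidesS P (Aset E P) v r m"
  using loc_spare_run[OF assms order_refl]
  by (simp add: decidesS_def decides_def Nset_spare_run[OF assms])

end

section \<open>Knowledge of the active agents versus belief of the nonfaulty agents\<close>

locale crash_system_lt_n = crash_system E P Ie de t
  for E :: "('a, 'v, 'x, 'm) iex"
    and P :: "'a \<Rightarrow> ('v, 'x) lstate \<Rightarrow> 'v act"
    and Ie :: "'e set"
    and de :: "'e \<Rightarrow> ('a \<Rightarrow> 'v act) \<Rightarrow> 'e"
    and t :: nat +
  assumes crashes_lt_n: "t < card (UNIV :: 'a set)"
begin

lemma Nset_nonempty:
  assumes "r \<in> runs E P Ie de t"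
  shows "\<exists>j. j \<in> Nset E P r m"
proof -
  have "card {i. \<exists>k. crashes_at (advr r) i k} \<le> t"
    using runs_advr_Crash[OF assms] by (simp add: Crash_def)
  then have "{i. \<exists>k. crashes_at (advr r) i k} \<noteq> UNIV"
    using crashes_lt_n by auto
  then obtain j where "\<not> (\<exists>k. crashes_at (advr r) j k)"
    by blast
  then show ?thesis
    using Crash_never_crashes_or_crashes_at[OF runs_advr_Crash[OF assms]]
      Nset_iff_never_crashes[OF assms] by blast
qed

lemma EB_step_spare_run:
  assumes "r \<in> runs E P Ie de t"
  shows "EB_step (runs E P Ie de t) (Nset E P) (r, m) (spare_run E P de r m, m)"
    and "EB_step (runs E P Ie de t) (Nset E P) (spare_run E P de r m, m) (r, m)"
proof -
  obtain j where "j \<in> Nset E P r m"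
    using Nset_nonempty[OF assms] by blast
  moreover have "j \<in> Nset E P (spare_run E P de r m) m"
    using subsetD[OF Nset_subset_Aset calculation] by (simp add: Nset_spare_run[OF assms])
  ultimately show "EB_step (runs E P Ie de t) (Nset E P) (r, m) (spare_run E P de r m, m)"
    and "EB_step (runs E P Ie de t) (Nset E P) (spare_run E P de r m, m) (r, m)"
    using assms spare_run_in_runs[OF assms] loc_spare_run[OF assms order_refl] by auto
qed

lemma Ek_step_Aset_imp_EB_reachable:
  assumes "r \<in> runs E P Ie de t" and "Ek_step (runs E P Ie de t) (Aset E P) (r, m) (r', m')"
  shows "(EB_step (runs E P Ie de t) (Nset E P))\<^sup>+\<^sup>+ (r, m) (r', m')"
proof -
  let ?step = "EB_step (runs E P Ie de t) (Nset E P)"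
  obtain i where r': "r' \<in> runs E P Ie de t" and i: "i \<in> Aset E P r m" "loc r' m' i = loc r m i"
    using assms(2) by auto
  have "i \<in> Aset E P r' m'"
    using i Aset_iff_not_Crashed[OF assms(1)] Aset_iff_not_Crashed[OF r'] by simp
  then have "?step (spare_run E P de r m, m) (spare_run E P de r' m', m')"
    using i spare_run_in_runs[OF r'] loc_spare_run[OF assms(1) order_refl]
      loc_spare_run[OF r' order_refl] by (auto simp: Nset_spare_run[OF assms(1)] Nset_spare_run[OF r'])
  then show ?thesis
    using EB_step_spare_run(1)[OF assms(1)] EB_step_spare_run(2)[OF r']
    by (meson tranclp.r_into_trancl tranclp.trancl_into_trancl tranclp_into_tranclp2)
qed

lemma Ek_reachable_Aset_imp_EB_reachable:
  assumes "(Ek_step (runs E P Ie de t) (Aset E P))\<^sup>+\<^sup>+ p q" and "fst p \<in> runs E P Ie de t"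
  shows "(EB_step (runs E P Ie de t) (Nset E P))\<^sup>+\<^sup>+ p q"
  using assms
proof induction
  case (base q)
  then show ?case
    using Ek_step_Aset_imp_EB_reachable by (cases p, cases q) simp
next
  case (step q q')
  moreover have "fst q \<in> runs E P Ie de t"
    using step.hyps(1) by (induction rule: tranclp_induct) (auto elim: Ek_step.elims)
  ultimately show ?case
    using Ek_step_Aset_imp_EB_reachable[of "fst q" "snd q" "fst q'" "snd q'"]
    by (auto intro: tranclp_trans)
qed

lemma Ck_Aset_iff_CB_Nset:
  assumes "r \<in> runs E P Ie de t"
  shows "Ck (runs E P Ie de t) (Aset E P) (decidesS P (Aset E P) v) r m
     \<longleftrightarrow> CB (runs E P Ie de t) (Nset E P) (decidesS P (Nset E P) v) r m"
proof
  assume "Ck (runs E P Ie de t) (Aset E P) (decidesS P (Aset E P) v) r m"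
  then show "CB (runs E P Ie de t) (Nset E P) (decidesS P (Nset E P) v) r m"
    using Ck_imp_CB_of_subset[where S = "Nset E P" and T = "Aset E P", OF Nset_subset_Aset]
    by blast
next
  assume CB: "CB (runs E P Ie de t) (Nset E P) (decidesS P (Nset E P) v) r m"
  show "Ck (runs E P Ie de t) (Aset E P) (decidesS P (Aset E P) v) r m"
    unfolding Ck_iff_reachable
  proof (intro allI impI)
    fix r' m'
    assume "(Ek_step (runs E P Ie de t) (Aset E P))\<^sup>+\<^sup>+ (r, m) (r', m')"
    then have reach: "(EB_step (runs E P Ie de t) (Nset E P))\<^sup>+\<^sup>+ (r, m) (r', m')"
      and r': "r' \<in> runs E P Ie de t"
      using Ek_reachable_Aset_imp_EB_reachable assms
      by (auto elim: tranclp.cases Ek_step.elims)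
    have "(EB_step (runs E P Ie de t) (Nset E P))\<^sup>+\<^sup>+ (r, m) (spare_run E P de r' m', m')"
      using reach EB_step_spare_run(1)[OF r'] by (rule tranclp.trancl_into_trancl)
    then have "decidesS P (Nset E P) v (spare_run E P de r' m') m'"
      using CB by (simp add: CB_iff_reachable)
    then show "decidesS P (Aset E P) v r' m'"
      using decidesS_Nset_spare_run[OF r'] by simp
  qed
qed

lemma Kn_Ck_Aset_iff_Bel_CB_Nset:
  assumes "r \<in> runs E P Ie de t" and "i \<in> Aset E P r m"
  shows "Kn (runs E P Ie de t) i (Ck (runs E P Ie de t) (Aset E P) (decidesS P (Aset E P) v)) r m
     \<longleftrightarrow> Bel (runs E P Ie de t) (Nset E P) i
           (CB (runs E P Ie de t) (Nset E P) (decidesS P (Nset E P) v)) r m"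
    (is "?K \<longleftrightarrow> Bel ?R ?N i ?CB r m")
proof -
  have "?K \<longleftrightarrow> Kn ?R i ?CB r m"
    using Ck_Aset_iff_CB_Nset by (auto simp: Kn_def)
  also have "\<dots> \<longleftrightarrow> Bel ?R ?N i ?CB r m"
  proof
    assume "Bel ?R ?N i ?CB r m"
    show "Kn ?R i ?CB r m"
      unfolding Kn_def
    proof (intro ballI allI impI)
      fix r' m'
      assume r': "r' \<in> ?R" and same: "loc r' m' i = loc r m i"
      have "i \<in> Aset E P r' m'"
        using assms same Aset_iff_not_Crashed[OF assms(1)] Aset_iff_not_Crashed[OF r'] by simp
      then have "?CB (spare_run E P de r' m') m'"
        using \<open>Bel ?R ?N i ?CB r m\<close> same spare_run_in_runs[OF r'] loc_spare_run[OF r' order_refl]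
        by (simp add: Bel_def Kn_def Nset_spare_run[OF r'])
      then show "?CB r' m'"
        using CB_EB_step EB_step_spare_run(2)[OF r'] by blast
    qed
  qed (simp add: Bel_def Kn_def)
  finally show ?thesis .
qed

end

theorem proposition9:
  fixes E :: "('a::finite, 'v, 'x, 'm) iex"
    and P :: "'a \<Rightarrow> ('v, 'x) lstate \<Rightarrow> 'v act"
    and Ie :: "'e set"
    and de :: "'e \<Rightarrow> ('a \<Rightarrow> 'v act) \<Rightarrow> 'e"
    and t :: nat
  defines "R \<equiv> runs E P Ie de t"
  assumes "t < card (UNIV :: 'a set)"
    and "iex_wf E"
    and "hard_crash_protocol P"
    and "SBA_N_valid E P R"
  shows "\<forall>i v.
     valid R (\<lambda>r m. Ck R (Aset E P) (decidesS P (Aset E P) v) r m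
                     \<longleftrightarrow> CB R (Nset E P) (decidesS P (Nset E P) v) r m) \<and>
     valid R (\<lambda>r m. i \<in> Aset E P r m \<longrightarrow>
                    (Kn R i (Ck R (Aset E P) (decidesS P (Aset E P) v)) r m
                     \<longleftrightarrow> Bel R (Nset E P) i (CB R (Nset E P) (decidesS P (Nset E P) v)) r m))"
proof -
  interpret crash_system_lt_n E P Ie de t
    using assms(2,3) by unfold_locales auto
  show ?thesis
    unfolding R_def valid_def
    using Ck_Aset_iff_CB_Nset Kn_Ck_Aset_iff_Bel_CB_Nset by blast
qed

end
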